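(* Let $p$ be a random partition that generates the potential for TU games, i.e., $\sum_{\pi\in\Pi(N)}p_N(\pi)\sum_{B\in\pi}v(B)=\mathrm{Pot}(v)$ for all $N\subseteq\mathbf{U}$ and all TU games $v$ on $N$. Then (i) $p_N(\{N\})=\frac1n$ and $p_N(\{N\setminus\{i\},\{i\}\})=\frac{1}{n(n-1)}$ for all $N\subseteq\mathbf{U}$ and $i\in N$ (for the second identity, $n\ge 2$); (ii) for all $N\subseteq\mathbf{U}$ with $n\le 3$, $p_N(\pi)=p^\star_N(\pi)=\frac{\prod_{B\in\pi}(b-1)!}{n!}$ for all $\pi\in\Pi(N)$.
   Context: $\mathbf{U}$ is a finite set of players; cardinalities of $N,S,B$ are $n,s,b$. $\Pi(N)$ is the set of partitions of $N$. A random partition is a family $p=(p_N)_{N\subseteq\mathbf{U}}$ with $p_N$ a probability distribution on $\Pi(N)$. A TU game on $N$ is $v:2^N\to\mathbb{R}$ with $v(\emptyset)=0$. $\mathrm{Pot}$ is the potential for TU games, $\mathrm{Pot}(v)=\sum_{\emptyset\ne S\subseteq N}\frac{(s-1)!(n-s)!}{n!}v(S)$ (the unique map vanishing on the empty game with $\sum_{i\in N}[\mathrm{Pot}(v)-\mathrm{Pot}(v|_{2^{N\setminus\{i\}}})]=v(N)$). *)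

theory Defs
  imports Complex_Main "HOL-Library.Disjoint_Sets"
begin

definition Partitions :: "'a set \<Rightarrow> 'a set set set" where
  "Partitions N = {P. partition_on N P}"

definition random_partition :: "'a set \<Rightarrow> ('a set \<Rightarrow> 'a set set \<Rightarrow> real) \<Rightarrow> bool" where
  "random_partition U p \<longleftrightarrow>
     (\<forall>N. N \<subseteq> U \<longrightarrow> (\<forall>\<pi>\<in>Partitions N. p N \<pi> \<ge> 0) \<and> (\<Sum>\<pi>\<in>Partitions N. p N \<pi>) = 1)"

text \<open>A TU game on N: v with v(\<emptyset>) = 0 (only values on subsets of N matter).\<close>
definition TU_game :: "'a set \<Rightarrow> ('a set \<Rightarrow> real) \<Rightarrow> bool" where
  "TU_game N v \<longleftrightarrow> v {} = 0"

definition Pot :: "'a set \<Rightarrow> ('a set \<Rightarrow> real) \<Rightarrow> real" where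
  "Pot N v = (\<Sum>S | S \<subseteq> N \<and> S \<noteq> {}.
      (fact (card S - 1) * fact (card N - card S) / fact (card N)) * v S)"

definition generates_Pot :: "'a set \<Rightarrow> ('a set \<Rightarrow> 'a set set \<Rightarrow> real) \<Rightarrow> bool" where
  "generates_Pot U p \<longleftrightarrow>
     (\<forall>N v. N \<subseteq> U \<longrightarrow> TU_game N v \<longrightarrow>
        (\<Sum>\<pi>\<in>Partitions N. p N \<pi> * (\<Sum>B\<in>\<pi>. v B)) = Pot N v)"

definition p_star :: "'a set \<Rightarrow> 'a set set \<Rightarrow> real" where
  "p_star N \<pi> = (\<Prod>B\<in>\<pi>. fact (card B - 1)) / fact (card N)"

end

theory Submission
  imports Defs
begin

text \<open>Testing the generating identity on the game that is 1 on a single coalition S and 0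
  elsewhere shows that S is a block of the random partition of N with probability
  (s-1)!(n-s)!/n!. The coalitions N and N - {i} are blocks of exactly one partition each, namely
  {N} and {N - {i}, {i}}, which gives (i) and agreement with p* there. For n \<le> 3 the only
  remaining partition is the partition of a three-player set into singletons; besides
  {N - {a}, {a}} it is the only partition having {a} as a block, so its probability is
  1/3 - 1/6 = 1/6.\<close>

lemma finite_Partitions: "finite N \<Longrightarrow> finite (Partitions N)"
  unfolding Partitions_def by (rule finitely_many_partition_on)

lemma Partitions_empty: "Partitions {} = {{}}"
  unfolding Partitions_def by (auto simp: partition_on_empty)

lemma partition_on_singleton_iff: "partition_on {x} P \<longleftrightarrow> P = {{x}}"
proof
  assume P: "partition_on {x} P"
  have "B = {x}" if "B \<in> P" for B
  proof -
    have "B \<subseteq> {x}"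
      using that partition_onD1[OF P] by blast
    moreover have "B \<noteq> {}"
      using that partition_onD3[OF P] by blast
    ultimately show ?thesis
      by blast
  qed
  moreover have "P \<noteq> {}"
    using partition_onD1[OF P] by auto
  ultimately show "P = {{x}}"
    by blast
qed (simp add: partition_on_space)

lemma partition_on_remove_block:
  assumes "partition_on A P" "B \<in> P"
  shows "partition_on (A - B) (P - {B})"
proof -
  have "disjnt B (\<Union>(P - {B}))"
    using partition_onD2[OF assms(1)] assms(2) by (auto simp: disjnt_def dest: disjointD)
  moreover have "insert B (P - {B}) = P"
    using assms(2) by blast
  ultimately show ?thesis
    using partition_on_insert[of B "P - {B}" A] assms(1) by simp
qed

lemma Partitions_with_whole_block:
  assumes "N \<noteq> {}"
  shows "{\<pi> \<in> Partitions N. N \<in> \<pi>} = {{N}}"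
proof -
  have "\<pi> = {N}" if "partition_on N \<pi>" "N \<in> \<pi>" for \<pi>
    using partition_on_remove_block[OF that] that(2) by (auto simp: partition_on_empty)
  moreover have "partition_on N {N}"
    using partition_on_space[OF assms] .
  ultimately show ?thesis
    unfolding Partitions_def by blast
qed

lemma Partitions_with_block_Diff_singleton:
  assumes "i \<in> N" "N - {i} \<noteq> {}"
  shows "{\<pi> \<in> Partitions N. N - {i} \<in> \<pi>} = {{N - {i}, {i}}}"
proof -
  have rest: "N - (N - {i}) = {i}"
    using assms(1) by blast
  have "\<pi> = {N - {i}, {i}}" if "partition_on N \<pi>" "N - {i} \<in> \<pi>" for \<pi>
    using partition_on_remove_block[OF that] that(2)
    unfolding rest partition_on_singleton_iff by blast
  moreover have "partition_on N {N - {i}, {i}}"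
    using assms by (auto simp: partition_on_def disjoint_def)
  ultimately show ?thesis
    unfolding Partitions_def by blast
qed

lemma partition_on_card_le_1:
  assumes "partition_on A P" "finite A" "\<And>B. B \<in> P \<Longrightarrow> card B \<le> 1"
  shows "P = (\<lambda>x. {x}) ` A"
proof -
  have singleton: "\<exists>x. B = {x}" if "B \<in> P" for B
  proof -
    have "B \<subseteq> A"
      using that partition_onD1[OF assms(1)] by blast
    then have "finite B"
      using assms(2) finite_subset by blast
    moreover have "B \<noteq> {}"
      using that partition_onD3[OF assms(1)] by blast
    ultimately have "card B = 1"
      using assms(3)[OF that] card_0_eq[of B] by linarith
    then show ?thesis
      by (simp add: card_1_singleton_iff)
  qed
  show ?thesis
  proof (intro equalityI subsetI)
    fix B assume "B \<in> P"
    then show "B \<in> (\<lambda>x. {x}) ` A"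
      using singleton partition_onD1[OF assms(1)] by blast
  next
    fix C assume "C \<in> (\<lambda>x. {x}) ` A"
    then obtain x where "x \<in> A" "C = {x}" by blast
    then obtain B where B: "B \<in> P" "x \<in> B"
      using partition_onD1[OF assms(1)] by blast
    moreover obtain y where "B = {y}"
      using singleton[OF B(1)] by blast
    ultimately show "C \<in> P"
      using \<open>C = {x}\<close> by simp
  qed
qed

lemma Partitions_card_le_3_cases:
  assumes \<pi>: "\<pi> \<in> Partitions N" and "finite N" "card N \<le> 3" "N \<noteq> {}"
  obtains "\<pi> = {N}"
    | i where "i \<in> N" "2 \<le> card N" "\<pi> = {N - {i}, {i}}"
    | "card N = 3" "\<pi> = (\<lambda>x. {x}) ` N"
proof -
  have part: "partition_on N \<pi>"
    using \<pi> by (simp add: Partitions_def)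
  have block: "B \<subseteq> N" "finite B" "0 < card B" if "B \<in> \<pi>" for B
  proof -
    show "B \<subseteq> N"
      using that partition_onD1[OF part] by blast
    then show "finite B"
      using assms(2) finite_subset by blast
    then show "0 < card B"
      using that partition_onD3[OF part] card_gt_0_iff by blast
  qed
  show ?thesis
  proof (cases "\<exists>B\<in>\<pi>. card N - 1 \<le> card B")
    case True
    then obtain B where B: "B \<in> \<pi>" "card N - 1 \<le> card B" by blast
    have "card (N - B) \<le> 1"
      using B block[OF B(1)] assms(2) by (simp add: card_Diff_subset)
    then consider "card (N - B) = 0" | "card (N - B) = 1" by linarith
    then show ?thesis
    proof cases
      case 1
      then have "B = N"
        using block[OF B(1)] assms(2) by simp
      then show ?thesis
        using that(1) Partitions_with_whole_block[OF assms(4)] \<pi> B(1) by blast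
    next
      case 2
      then obtain i where "N - B = {i}"
        by (rule card_1_singletonE)
      then have i: "i \<in> N" "B = N - {i}"
        using block(1)[OF B(1)] by blast+
      then have "2 \<le> card N"
        using block(3)[OF B(1)] assms(2) by simp
      moreover have "N - {i} \<noteq> {}"
        using block(3)[OF B(1)] unfolding i(2) by (metis card.empty less_irrefl)
      then have "\<pi> = {N - {i}, {i}}"
        using Partitions_with_block_Diff_singleton[OF i(1)] \<pi> B(1) i(2) by blast
      ultimately show ?thesis
        using that(2) i(1) by blast
    qed
  next
    case False
    then have small_block: "card B < card N - 1" if "B \<in> \<pi>" for B
      using that by (simp add: not_le)
    then have small: "card B \<le> 1" if "B \<in> \<pi>" for B
      using that assms(3) by fastforce
    obtain B where "B \<in> \<pi>"
      using assms(4) partition_onD1[OF part] by blast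
    then have "card N = 3"
      using small_block block(3) assms(3) by fastforce
    moreover have "\<pi> = (\<lambda>x. {x}) ` N"
      using partition_on_card_le_1[OF part assms(2) small] .
    ultimately show ?thesis
      using that(3) by blast
  qed
qed

lemma Partitions_card_3_with_singleton_block:
  assumes "finite N" "card N = 3" "a \<in> N"
  shows "{\<pi> \<in> Partitions N. {a} \<in> \<pi>} = {{N - {a}, {a}}, (\<lambda>x. {x}) ` N}"
proof -
  have card_rest: "card (N - {i}) = 2" if "i \<in> N" for i
    using that assms(1,2) by simp
  have "\<pi> = {N - {a}, {a}} \<or> \<pi> = (\<lambda>x. {x}) ` N" if \<pi>: "\<pi> \<in> Partitions N" "{a} \<in> \<pi>" for \<pi>
  proof (rule Partitions_card_le_3_cases[OF \<pi>(1) assms(1)])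
    assume "\<pi> = {N}"
    then have "N = {a}"
      using \<pi>(2) by simp
    then show ?thesis
      using assms(2) by simp
  next
    fix i assume i: "i \<in> N" "\<pi> = {N - {i}, {i}}"
    have "card {a} \<noteq> card (N - {i})"
      using card_rest[OF i(1)] by simp
    then have "{a} \<noteq> N - {i}"
      by metis
    then show ?thesis
      using \<pi>(2) i by auto
  qed (use assms in auto)
  moreover have "N - {a} \<noteq> {}"
    using card_rest[OF assms(3)] by (metis card.empty zero_neq_numeral)
  then have "{N - {a}, {a}} \<in> Partitions N"
    using Partitions_with_block_Diff_singleton[OF assms(3)] by blast
  moreover have "(\<lambda>x. {x}) ` N \<in> Partitions N"
    by (simp add: Partitions_def partition_on_singletons)
  ultimately show ?thesis
    using assms(3) by auto
qed

lemma p_star_whole: "finite N \<Longrightarrow> N \<noteq> {} \<Longrightarrow> p_star N {N} = 1 / real (card N)"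
  by (simp add: p_star_def fact_reduce[of "card N"] card_gt_0_iff)

lemma p_star_split_off:
  assumes "finite N" "i \<in> N" "2 \<le> card N"
  shows "p_star N {N - {i}, {i}} = 1 / (real (card N) * (real (card N) - 1))"
proof -
  obtain m where m: "card N = m + 2"
    using assms(3) by (metis add.commute le_add_diff_inverse)
  have "N - {i} \<noteq> {i}" by blast
  then have "p_star N {N - {i}, {i}} = fact m / fact (m + 2)"
    using assms(1,2) m by (simp add: p_star_def)
  also have "\<dots> = 1 / ((real m + 2) * (real m + 1))"
  proof -
    have "fact (m + 2) = (real m + 2) * (real m + 1) * fact m"
      by (simp add: numeral_2_eq_2 algebra_simps)
    then show ?thesis
      by (simp del: fact_Suc)
  qed
  finally show ?thesis
    using m by (simp add: algebra_simps)
qed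

lemma p_star_singletons: "p_star N ((\<lambda>x. {x}) ` N) = 1 / fact (card N)"
  by (simp add: p_star_def prod.reindex)

definition block_probability :: "('a set \<Rightarrow> 'a set set \<Rightarrow> real) \<Rightarrow> 'a set \<Rightarrow> 'a set \<Rightarrow> real" where
  "block_probability p N S = sum (p N) {\<pi> \<in> Partitions N. S \<in> \<pi>}"

lemma generates_Pot_block_probability:
  assumes "generates_Pot U p" "N \<subseteq> U" "finite N" "S \<subseteq> N" "S \<noteq> {}"
  shows "block_probability p N S = fact (card S - 1) * fact (card N - card S) / fact (card N)"
proof -
  define v where "v T = (if T = S then 1 else 0 :: real)" for T
  have "TU_game N v"
    using assms(5) by (simp add: TU_game_def v_def)
  have game_value: "(\<Sum>B\<in>\<pi>. v B) = (if S \<in> \<pi> then 1 else 0)" if "\<pi> \<in> Partitions N" for \<pi>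
  proof -
    have "finite \<pi>"
      using that assms(3) finite_elements by (auto simp: Partitions_def)
    then show ?thesis
      by (simp add: v_def sum.delta')
  qed
  have "block_probability p N S = (\<Sum>\<pi>\<in>Partitions N. if S \<in> \<pi> then p N \<pi> else 0)"
    by (simp add: block_probability_def sum.inter_filter finite_Partitions assms(3))
  also have "\<dots> = (\<Sum>\<pi>\<in>Partitions N. p N \<pi> * (\<Sum>B\<in>\<pi>. v B))"
    by (rule sum.cong) (simp_all add: game_value)
  also have "\<dots> = Pot N v"
    using \<open>TU_game N v\<close> assms(1,2) by (simp add: generates_Pot_def)
  also have "\<dots> = fact (card S - 1) * fact (card N - card S) / fact (card N)"
    using assms(3-5) by (simp add: Pot_def v_def if_distrib sum.delta' cong: if_cong)
  finally show ?thesis .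
qed

lemma generates_Pot_whole_eq_p_star:
  assumes "generates_Pot U p" "N \<subseteq> U" "finite N" "N \<noteq> {}"
  shows "p N {N} = p_star N {N}"
  using generates_Pot_block_probability[OF assms(1-3) order_refl assms(4)]
  by (simp add: block_probability_def Partitions_with_whole_block[OF assms(4)] p_star_def)

lemma generates_Pot_split_off_eq_p_star:
  assumes "generates_Pot U p" "N \<subseteq> U" "finite N" "i \<in> N" "2 \<le> card N"
  shows "p N {N - {i}, {i}} = p_star N {N - {i}, {i}}"
proof -
  have "card (N - {i}) = card N - 1"
    using assms(3,4) by simp
  then have "N - {i} \<noteq> {}"
    using assms(5) by (intro notI) simp
  moreover have "N - {i} \<noteq> {i}" by blast
  ultimately show ?thesis
    using generates_Pot_block_probability[of U p N "N - {i}"] assms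
    by (simp add: block_probability_def Partitions_with_block_Diff_singleton p_star_def)
qed

lemma generates_Pot_singletons_eq_p_star:
  assumes "generates_Pot U p" "N \<subseteq> U" "finite N" "card N = 3"
  shows "p N ((\<lambda>x. {x}) ` N) = p_star N ((\<lambda>x. {x}) ` N)"
proof -
  have "N \<noteq> {}"
    using assms(4) by auto
  then obtain a where a: "a \<in> N"
    by blast
  have "card (N - {a}) = 2"
    using a assms(3,4) by simp
  then have "N - {a} \<noteq> {x}" for x
    by (intro notI) simp
  then have "{N - {a}, {a}} \<noteq> (\<lambda>x. {x}) ` N"
    by blast
  then have "block_probability p N {a} = p N {N - {a}, {a}} + p N ((\<lambda>x. {x}) ` N)"
    by (simp add: block_probability_def Partitions_card_3_with_singleton_block[OF assms(3,4) a])
  moreover have "block_probability p N {a} = 1 / 3"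
    using generates_Pot_block_probability[OF assms(1-3), of "{a}"] a assms(4)
    by (simp add: fact_numeral)
  moreover have "p N {N - {a}, {a}} = 1 / 6"
    using generates_Pot_split_off_eq_p_star[OF assms(1-3) a] p_star_split_off[OF assms(3) a] assms(4)
    by simp
  moreover have "p_star N ((\<lambda>x. {x}) ` N) = 1 / 6"
    using assms(4) by (simp add: p_star_singletons fact_numeral)
  ultimately show ?thesis
    by simp
qed

lemma random_partition_empty:
  assumes "random_partition U p"
  shows "p {} {} = 1"
proof -
  have "sum (p {}) (Partitions {}) = 1"
    using assms unfolding random_partition_def by blast
  then show ?thesis
    by (simp add: Partitions_empty)
qed

lemma generates_Pot_eq_p_star_card_le_3:
  assumes "random_partition U p" "generates_Pot U p" "N \<subseteq> U" "finite N" "card N \<le> 3"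
    and \<pi>: "\<pi> \<in> Partitions N"
  shows "p N \<pi> = p_star N \<pi>"
proof (cases "N = {}")
  case True
  then show ?thesis
    using \<pi> random_partition_empty[OF assms(1)] by (simp add: Partitions_empty p_star_def)
next
  case False
  show ?thesis
    by (rule Partitions_card_le_3_cases[OF \<pi> assms(4,5) False])
      (simp_all add: generates_Pot_whole_eq_p_star[OF assms(2-4) False]
        generates_Pot_split_off_eq_p_star[OF assms(2-4)] generates_Pot_singletons_eq_p_star[OF assms(2-4)])
qed

theorem corollary1:
  fixes U :: "'a set" and p :: "'a set \<Rightarrow> 'a set set \<Rightarrow> real"
  assumes "finite U"
    and "random_partition U p"
    and "generates_Pot U p"
  shows "(\<forall>N. N \<subseteq> U \<longrightarrow> N \<noteq> {} \<longrightarrow> p N {N} = 1 / real (card N))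
       \<and> (\<forall>N i. N \<subseteq> U \<longrightarrow> i \<in> N \<longrightarrow> card N \<ge> 2 \<longrightarrow>
            p N {N - {i}, {i}} = 1 / (real (card N) * (real (card N) - 1)))
       \<and> (\<forall>N. N \<subseteq> U \<longrightarrow> card N \<le> 3 \<longrightarrow>
            (\<forall>\<pi>\<in>Partitions N. p N \<pi> = p_star N \<pi> \<and>
               p_star N \<pi> = (\<Prod>B\<in>\<pi>. fact (card B - 1)) / fact (card N)))"
proof (intro conjI allI impI ballI)
  fix N assume N: "N \<subseteq> U"
  then have "finite N"
    using assms(1) finite_subset by blast
  show "N \<noteq> {} \<Longrightarrow> p N {N} = 1 / real (card N)"
    using generates_Pot_whole_eq_p_star[OF assms(3) N \<open>finite N\<close>] p_star_whole[OF \<open>finite N\<close>]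
    by simp
  show "p N {N - {i}, {i}} = 1 / (real (card N) * (real (card N) - 1))"
    if "i \<in> N" "card N \<ge> 2" for i
    using generates_Pot_split_off_eq_p_star[OF assms(3) N \<open>finite N\<close> that]
      p_star_split_off[OF \<open>finite N\<close> that] by simp
  show "p N \<pi> = p_star N \<pi>" if "card N \<le> 3" "\<pi> \<in> Partitions N" for \<pi>
    using generates_Pot_eq_p_star_card_le_3[OF assms(2,3) N \<open>finite N\<close> that] .
  show "p_star N \<pi> = (\<Prod>B\<in>\<pi>. fact (card B - 1)) / fact (card N)" for \<pi>
    by (simp add: p_star_def)
qed

end
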